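(* Let $G=(V,E)$ be a simple undirected graph. A vector $x\in\{0,1\}^{E^c}$ satisfies $$\sum_{f\in \textnormal{int}(C)} x_f-(|C|-3)\Big(\sum_{f\in F(C)}x_f-|F(C)|+1\Big)\ \ge 0$$ for every $C\in\mathcal{C}$ with $\textnormal{int}(C)\cap E=\emptyset$ if and only if $x\in X(G)$. Consequently the integer program of minimizing $\sum_{f\in E^c}x_f$ over such $x$ is a valid formulation of the minimum chordal completion problem: its optimal solutions are exactly the characteristic vectors of minimum-cardinality chordal completions of $G$.
   Context: $E^c=\binom{V}{2}\setminus E$. For an ordered list $C=(v_0,\ldots,v_{k-1})$ of distinct vertices of $V$: $V(C)=\{v_0,\ldots,v_{k-1}\}$, $|C|=k$, $\textnormal{ext}(C)=\{\{v_{k-1},v_0\}\}\cup\{\{v_{i-1},v_i\}:1\le i\le k-1\}$, $\textnormal{int}(C)=\binom{V(C)}{2}\setminus\textnormal{ext}(C)$, and $F(C)=\textnormal{ext}(C)\setminus E$. $\mathcal{C}$ is the family of all ordered lists of at least three distinct vertices of $V$. For $x\in\{0,1\}^{E^c}$, $E(x)=\{f\in E^c:x_f=1\}$, and $X(G)=\{x\in\{0,1\}^{E^c}: (V,E\cup E(x))\text{ is chordal}\}$, where a graph is chordal if every cycle with at least four vertices has a chord (an edge joining two nonconsecutive vertices of the cycle). A chordal completion of $G$ is a set $F\subseteq E^c$ with $(V,E\cup F)$ chordal. *)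

theory Defs
  imports Main
begin

definition binom2 :: "'a set \<Rightarrow> 'a set set" where
  "binom2 S = {e. e \<subseteq> S \<and> card e = 2}"

definition simple_graph :: "'a set \<Rightarrow> 'a set set \<Rightarrow> bool" where
  "simple_graph V E \<longleftrightarrow> finite V \<and> E \<subseteq> binom2 V"

definition Ecomp :: "'a set \<Rightarrow> 'a set set \<Rightarrow> 'a set set" where
  "Ecomp V E = binom2 V - E"

definition ext :: "'a list \<Rightarrow> 'a set set" where
  "ext C = {{C ! (length C - 1), C ! 0}} \<union> {{C ! (i - 1), C ! i} | i. 1 \<le> i \<and> i \<le> length C - 1}"

definition intr :: "'a list \<Rightarrow> 'a set set" where
  "intr C = binom2 (set C) - ext C"

definition Fc :: "'a set set \<Rightarrow> 'a list \<Rightarrow> 'a set set" where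
  "Fc E C = ext C - E"

definition calC :: "'a set \<Rightarrow> 'a list set" where
  "calC V = {C. distinct C \<and> set C \<subseteq> V \<and> length C \<ge> 3}"

definition is_cycle :: "'a set \<Rightarrow> 'a set set \<Rightarrow> 'a list \<Rightarrow> bool" where
  "is_cycle V E C \<longleftrightarrow> distinct C \<and> set C \<subseteq> V \<and> length C \<ge> 3 \<and> ext C \<subseteq> E"

definition has_chord :: "'a set set \<Rightarrow> 'a list \<Rightarrow> bool" where
  "has_chord E C \<longleftrightarrow> (\<exists>e\<in>E. e \<in> binom2 (set C) \<and> e \<notin> ext C)"

definition chordal :: "'a set \<Rightarrow> 'a set set \<Rightarrow> bool" where
  "chordal V E \<longleftrightarrow> (\<forall>C. is_cycle V E C \<and> length C \<ge> 4 \<longrightarrow> has_chord E C)"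

text \<open>0/1 vectors indexed by E^c (represented as functions vanishing outside E^c).\<close>

definition binvecs :: "'a set \<Rightarrow> 'a set set \<Rightarrow> ('a set \<Rightarrow> int) set" where
  "binvecs V E = {x. (\<forall>f\<in>Ecomp V E. x f \<in> {0, 1}) \<and> (\<forall>f. f \<notin> Ecomp V E \<longrightarrow> x f = 0)}"

definition Ex :: "'a set \<Rightarrow> 'a set set \<Rightarrow> ('a set \<Rightarrow> int) \<Rightarrow> 'a set set" where
  "Ex V E x = {f \<in> Ecomp V E. x f = 1}"

definition XG :: "'a set \<Rightarrow> 'a set set \<Rightarrow> ('a set \<Rightarrow> int) set" where
  "XG V E = {x \<in> binvecs V E. chordal V (E \<union> Ex V E x)}"

definition chordal_completion :: "'a set \<Rightarrow> 'a set set \<Rightarrow> 'a set set \<Rightarrow> bool" where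
  "chordal_completion V E F \<longleftrightarrow> F \<subseteq> Ecomp V E \<and> chordal V (E \<union> F)"

definition charvec :: "'a set set \<Rightarrow> 'a set \<Rightarrow> int" where
  "charvec F = (\<lambda>f. if f \<in> F then 1 else 0)"

definition cycle_ineq :: "'a set set \<Rightarrow> ('a set \<Rightarrow> int) \<Rightarrow> 'a list \<Rightarrow> bool" where
  "cycle_ineq E x C \<longleftrightarrow>
     (\<Sum>f\<in>intr C. x f) - (int (length C) - 3) * ((\<Sum>f\<in>Fc E C. x f) - int (card (Fc E C)) + 1) \<ge> 0"

definition feasible :: "'a set \<Rightarrow> 'a set set \<Rightarrow> ('a set \<Rightarrow> int) set" where
  "feasible V E = {x \<in> binvecs V E. \<forall>C\<in>calC V. intr C \<inter> E = {} \<longrightarrow> cycle_ineq E x C}"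

end

theory Submission
  imports Defs
begin

text \<open>A chord {v_i, v_j} of a cycle C splits it into two shorter cycles whose lengths add up to
  |C| + 2 and whose vertex sets meet only in {v_i, v_j}. By induction, a cycle with k vertices in a
  chordal graph therefore spans at least 2k - 3 edges, i.e. has at least k - 3 chords. If x encodes a
  chordal completion, this gives the cycle inequality whenever all non-edges of F(C) are selected;
  otherwise its second term is non-positive. Conversely, a chordless cycle of length at least four
  in the completed graph has no selected interior pair and all of F(C) selected, so it violates its
  inequality. The optimisation statement follows because the feasible vectors are exactly the
  characteristic vectors of the chordal completions, and the objective is their cardinality.\<close>

lemma finite_binom2: "finite S \<Longrightarrow> finite (binom2 S)"
  unfolding binom2_def by (rule finite_subset[of _ "Pow S"]) auto

lemma doubleton_in_binom2: "a \<in> S \<Longrightarrow> b \<in> S \<Longrightarrow> a \<noteq> b \<Longrightarrow> {a, b} \<in> binom2 S"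
  unfolding binom2_def by auto

lemma binom2_mono: "S \<subseteq> T \<Longrightarrow> binom2 S \<subseteq> binom2 T"
  unfolding binom2_def by auto

lemma binom2_Int_subset:
  assumes "S \<inter> T \<subseteq> e" and "card e = 2"
  shows "binom2 S \<inter> binom2 T \<subseteq> {e}"
proof
  fix f assume "f \<in> binom2 S \<inter> binom2 T"
  with assms(1) have "f \<subseteq> e" "card f = 2" unfolding binom2_def by auto
  moreover have "finite e" using assms(2) by (intro card_ge_0_finite) simp
  ultimately show "f \<in> {e}" using assms(2) card_subset_eq[of e f] by simp
qed

lemma ext_closing_mem: "{C ! (length C - 1), C ! 0} \<in> ext C"
  unfolding ext_def by blast

lemma ext_consecutive_mem: "1 \<le> m \<Longrightarrow> m < length C \<Longrightarrow> {C ! (m - 1), C ! m} \<in> ext C"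
  unfolding ext_def by fastforce

lemma ext_subsetI:
  assumes "{C ! (length C - 1), C ! 0} \<in> S"
    and "\<And>m. 1 \<le> m \<Longrightarrow> m < length C \<Longrightarrow> {C ! (m - 1), C ! m} \<in> S"
  shows "ext C \<subseteq> S"
  using assms unfolding ext_def by fastforce

lemma ext_subset_binom2:
  assumes "distinct C" and "length C \<ge> 3"
  shows "ext C \<subseteq> binom2 (set C)"
proof (rule ext_subsetI)
  have "C ! (length C - 1) \<noteq> C ! 0"
    using assms nth_eq_iff_index_eq[OF assms(1), of "length C - 1" 0] by fastforce
  then show "{C ! (length C - 1), C ! 0} \<in> binom2 (set C)"
    using assms(2) by (intro doubleton_in_binom2) (auto intro: nth_mem)
  show "{C ! (m - 1), C ! m} \<in> binom2 (set C)" if "1 \<le> m" "m < length C" for m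
    using assms that by (intro doubleton_in_binom2) (auto simp: nth_eq_iff_index_eq)
qed

lemma card_ext_le: "length C \<ge> 1 \<Longrightarrow> card (ext C) \<le> length C"
proof -
  assume "length C \<ge> 1"
  have "ext C = insert {C ! (length C - 1), C ! 0} ((\<lambda>i. {C ! (i - 1), C ! i}) ` {1..length C - 1})"
    unfolding ext_def by auto
  then have "card (ext C) \<le> Suc (card ((\<lambda>i. {C ! (i - 1), C ! i}) ` {1..length C - 1}))"
    by (simp add: card_insert_le_m1)
  also have "\<dots> \<le> Suc (card {1..length C - 1})" using card_image_le[of "{1..length C - 1}"] by simp
  finally show ?thesis using \<open>length C \<ge> 1\<close> by simp
qed

lemma card_ext_triangle:
  assumes "distinct C" and "length C = 3"
  shows "card (ext C) = 3"
proof -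
  have "{i. 1 \<le> i \<and> i \<le> length C - 1} = {1, 2}" using assms(2) by auto
  then have "ext C = {{C!2, C!0}, {C!0, C!1}, {C!1, C!2}}"
    unfolding ext_def using assms(2) by (auto simp: setcompr_eq_image)
  moreover have "C!0 \<noteq> C!1" "C!0 \<noteq> C!2" "C!1 \<noteq> C!2"
    using assms by (auto simp: nth_eq_iff_index_eq)
  ultimately show ?thesis by (simp add: doubleton_eq_iff)
qed

text \<open>For i < j, the cycles v_i, ..., v_j and v_0, ..., v_i, v_j, ..., v_(k-1) obtained by
  cutting C along the pair {v_i, v_j}.\<close>

definition chord_arc :: "'a list \<Rightarrow> nat \<Rightarrow> nat \<Rightarrow> 'a list" where
  "chord_arc C i j = drop i (take (Suc j) C)"

definition chord_bypass :: "'a list \<Rightarrow> nat \<Rightarrow> nat \<Rightarrow> 'a list" where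
  "chord_bypass C i j = take (Suc i) C @ drop j C"

lemma set_chord_arc_subset: "set (chord_arc C i j) \<subseteq> set C"
  unfolding chord_arc_def by (meson in_set_dropD in_set_takeD subsetI)

lemma set_chord_bypass_subset: "set (chord_bypass C i j) \<subseteq> set C"
  unfolding chord_bypass_def by (auto dest: in_set_dropD in_set_takeD)

context
  fixes C :: "'a list" and i j :: nat
  assumes ij: "i < j" "j < length C"
begin

lemma length_chord_arc: "length (chord_arc C i j) = Suc j - i"
  using ij unfolding chord_arc_def by simp

lemma nth_chord_arc: "m < Suc j - i \<Longrightarrow> chord_arc C i j ! m = C ! (i + m)"
  using ij unfolding chord_arc_def by simp

lemma length_chord_bypass: "length (chord_bypass C i j) = Suc i + (length C - j)"
  using ij unfolding chord_bypass_def by simp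

lemma nth_chord_bypass_head: "m \<le> i \<Longrightarrow> chord_bypass C i j ! m = C ! m"
  using ij unfolding chord_bypass_def by (simp add: nth_append)

lemma nth_chord_bypass_tail:
  assumes "j \<le> n" "n < length C"
  shows "chord_bypass C i j ! (Suc i + (n - j)) = C ! n"
proof -
  have "length (take (Suc i) C) = Suc i" using ij by simp
  then show ?thesis
    using assms nth_append_length_plus[of "take (Suc i) C" "drop j C" "n - j"]
    unfolding chord_bypass_def by simp
qed

lemma in_set_chord_arc:
  assumes "x \<in> set (chord_arc C i j)"
  obtains t where "i \<le> t" "t \<le> j" "x = C ! t"
proof -
  from assms obtain m where "m < Suc j - i" "x = chord_arc C i j ! m"
    by (auto simp: in_set_conv_nth length_chord_arc)
  with that[of "i + m"] show thesis by (simp add: nth_chord_arc)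
qed

lemma in_set_chord_bypass:
  assumes "x \<in> set (chord_bypass C i j)"
  obtains t where "t < length C" "t \<le> i \<or> j \<le> t" "x = C ! t"
proof -
  consider "x \<in> set (take (Suc i) C)" | "x \<in> set (drop j C)"
    using assms unfolding chord_bypass_def by auto
  then show thesis
  proof cases
    case 1
    then obtain t where "t < Suc i" "x = C ! t" using ij by (auto simp: in_set_conv_nth)
    with ij that[of t] show thesis by auto
  next
    case 2
    then obtain m where "m < length (drop j C)" "x = drop j C ! m" by (auto simp: in_set_conv_nth)
    with that[of "j + m"] show thesis by simp
  qed
qed

lemma set_chord_arc_Int_bypass:
  assumes "distinct C"
  shows "set (chord_arc C i j) \<inter> set (chord_bypass C i j) \<subseteq> {C ! i, C ! j}"
proof
  fix x assume "x \<in> set (chord_arc C i j) \<inter> set (chord_bypass C i j)"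
  then obtain s t where s: "i \<le> s" "s \<le> j" "x = C ! s"
    and t: "t < length C" "t \<le> i \<or> j \<le> t" "x = C ! t"
    using in_set_chord_arc in_set_chord_bypass by (metis IntD1 IntD2)
  have "s = t" using s t ij nth_eq_iff_index_eq[OF assms] by auto
  with s t show "x \<in> {C ! i, C ! j}" by auto
qed

lemma card_spanned_edges_chord_split:
  assumes "distinct C"
  shows "card (binom2 (set (chord_arc C i j)) \<inter> H) + card (binom2 (set (chord_bypass C i j)) \<inter> H)
           \<le> card (binom2 (set C) \<inter> H) + 1"
proof -
  define A B where "A = binom2 (set (chord_arc C i j)) \<inter> H"
    and "B = binom2 (set (chord_bypass C i j)) \<inter> H"
  have fin: "finite (binom2 (set C) \<inter> H)" using finite_binom2 by blast
  have AB: "A \<union> B \<subseteq> binom2 (set C) \<inter> H"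
    using binom2_mono[OF set_chord_arc_subset] binom2_mono[OF set_chord_bypass_subset]
    unfolding A_def B_def by blast
  then have "finite A" "finite B" using fin by (meson finite_subset le_sup_iff)+
  then have "card A + card B = card (A \<union> B) + card (A \<inter> B)" by (rule card_Un_Int)
  moreover have "card (A \<union> B) \<le> card (binom2 (set C) \<inter> H)" using AB fin by (rule card_mono[rotated])
  moreover have "card (A \<inter> B) \<le> 1"
  proof -
    have "C ! i \<noteq> C ! j" using ij assms by (simp add: nth_eq_iff_index_eq)
    then have "A \<inter> B \<subseteq> {{C ! i, C ! j}}"
      using binom2_Int_subset[OF set_chord_arc_Int_bypass[OF assms]] unfolding A_def B_def by auto
    then show ?thesis using card_mono[of "{{C ! i, C ! j}}"] by fastforce
  qed
  ultimately show ?thesis unfolding A_def B_def by linarith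
qed

lemma ext_chord_arc: "ext (chord_arc C i j) \<subseteq> insert {C ! i, C ! j} (ext C)"
proof (rule ext_subsetI)
  show "{chord_arc C i j ! (length (chord_arc C i j) - 1), chord_arc C i j ! 0}
          \<in> insert {C ! i, C ! j} (ext C)"
    using ij by (simp add: length_chord_arc nth_chord_arc insert_commute)
  fix m assume "1 \<le> m" "m < length (chord_arc C i j)"
  then have "{chord_arc C i j ! (m - 1), chord_arc C i j ! m} = {C ! (i + m - 1), C ! (i + m)}"
    by (simp add: length_chord_arc nth_chord_arc)
  also have "\<dots> \<in> ext C"
    using \<open>1 \<le> m\<close> \<open>m < length (chord_arc C i j)\<close> ij ext_consecutive_mem[of "i + m" C]
    by (simp add: length_chord_arc)
  finally show "{chord_arc C i j ! (m - 1), chord_arc C i j ! m} \<in> insert {C ! i, C ! j} (ext C)"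
    by simp
qed

lemma ext_chord_bypass: "ext (chord_bypass C i j) \<subseteq> insert {C ! i, C ! j} (ext C)"
proof (rule ext_subsetI)
  have last: "length (chord_bypass C i j) - 1 = Suc i + (length C - 1 - j)"
    using ij by (simp add: length_chord_bypass)
  have "chord_bypass C i j ! (length (chord_bypass C i j) - 1) = C ! (length C - 1)"
    unfolding last using ij by (intro nth_chord_bypass_tail) auto
  then show "{chord_bypass C i j ! (length (chord_bypass C i j) - 1), chord_bypass C i j ! 0}
          \<in> insert {C ! i, C ! j} (ext C)"
    using ext_closing_mem[of C] by (simp add: nth_chord_bypass_head)
  fix m assume m: "1 \<le> m" "m < length (chord_bypass C i j)"
  consider "m \<le> i" | "m = Suc i" | "Suc i < m" by linarith
  then show "{chord_bypass C i j ! (m - 1), chord_bypass C i j ! m} \<in> insert {C ! i, C ! j} (ext C)"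
  proof cases
    case 1
    with m ij ext_consecutive_mem[of m C] show ?thesis by (simp add: nth_chord_bypass_head)
  next
    case 2
    with ij show ?thesis
      using nth_chord_bypass_head[of i] nth_chord_bypass_tail[of j] by simp
  next
    case 3
    define n where "n = m - Suc i + j"
    have n: "j < n" "n < length C" and
      idx: "m = Suc i + (n - j)" "m - 1 = Suc i + (n - 1 - j)"
      using 3 m ij by (auto simp: n_def length_chord_bypass)
    have "chord_bypass C i j ! m = C ! n"
      unfolding idx(1) using n by (intro nth_chord_bypass_tail) auto
    moreover have "chord_bypass C i j ! (m - 1) = C ! (n - 1)"
      unfolding idx(2) using n by (intro nth_chord_bypass_tail) auto
    ultimately show ?thesis using n ext_consecutive_mem[of n C] by simp
  qed
qed

end

lemma chord_endpoints:
  assumes "distinct C" and "e \<in> binom2 (set C)" and "e \<notin> ext C"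
  obtains i j where "Suc i < j" "j < length C" "0 < i \<or> Suc j < length C" "e = {C ! i, C ! j}"
proof -
  from assms(2) obtain a b where "e = {a, b}" "a \<in> set C" "b \<in> set C" "a \<noteq> b"
    unfolding binom2_def by (auto simp: card_2_iff)
  then obtain p q where pq: "p < length C" "q < length C" "p \<noteq> q" "e = {C ! p, C ! q}"
    by (auto simp: in_set_conv_nth)
  define i j where "i = min p q" and "j = max p q"
  have ij: "i < j" "j < length C" "e = {C ! i, C ! j}"
    using pq by (auto simp: i_def j_def min_def max_def insert_commute)
  have "j \<noteq> Suc i"
    using ij assms(3) ext_consecutive_mem[of j C] by auto
  moreover have "0 < i \<or> Suc j < length C"
  proof (rule ccontr)
    assume "\<not> (0 < i \<or> Suc j < length C)"
    then have "i = 0" "j = length C - 1" using ij by auto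
    then show False using ij assms(3) ext_closing_mem[of C] by (simp add: insert_commute)
  qed
  ultimately show thesis using ij that[of i j] by simp
qed

lemma is_cycle_chord_arc:
  assumes "is_cycle V H C" and "Suc i < j" "j < length C" and "{C ! i, C ! j} \<in> H"
  shows "is_cycle V H (chord_arc C i j)"
  using assms ext_chord_arc[of i j C] length_chord_arc[of i j C] set_chord_arc_subset[of C i j]
  unfolding is_cycle_def by (auto simp: chord_arc_def)

lemma is_cycle_chord_bypass:
  assumes "is_cycle V H C" and "i < j" "j < length C" "0 < i \<or> Suc j < length C"
    and "{C ! i, C ! j} \<in> H"
  shows "is_cycle V H (chord_bypass C i j)"
proof -
  have "distinct (chord_bypass C i j)"
    using assms(1,2) set_take_disj_set_drop_if_distinct[of C "Suc i" j]
    unfolding is_cycle_def chord_bypass_def by auto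
  then show ?thesis
    using assms ext_chord_bypass[of i j C] length_chord_bypass[of i j C]
      set_chord_bypass_subset[of C i j]
    unfolding is_cycle_def by auto
qed

lemma chordal_cycle_card_spanned_edges:
  assumes "chordal V H" and "is_cycle V H C"
  shows "2 * length C \<le> card (binom2 (set C) \<inter> H) + 3"
  using assms(2)
proof (induction "length C" arbitrary: C rule: less_induct)
  case less
  have d: "distinct C" and l3: "length C \<ge> 3" and eH: "ext C \<subseteq> H"
    using less.prems unfolding is_cycle_def by auto
  have fin: "finite (binom2 (set C) \<inter> H)" using finite_binom2 by blast
  show ?case
  proof (cases "length C = 3")
    case True
    have "ext C \<subseteq> binom2 (set C) \<inter> H" using ext_subset_binom2[OF d l3] eH by auto
    then have "card (ext C) \<le> card (binom2 (set C) \<inter> H)" using fin by (rule card_mono[rotated])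
    then show ?thesis using card_ext_triangle[OF d True] True by simp
  next
    case False
    then obtain e where e: "e \<in> H" "e \<in> binom2 (set C)" "e \<notin> ext C"
      using assms(1) less.prems l3 unfolding chordal_def has_chord_def by fastforce
    then obtain i j where ij: "Suc i < j" "j < length C" "0 < i \<or> Suc j < length C"
      and e_ij: "e = {C ! i, C ! j}"
      using chord_endpoints[OF d] by blast
    have lengths: "length (chord_arc C i j) + length (chord_bypass C i j) = length C + 2"
      "length (chord_arc C i j) < length C" "length (chord_bypass C i j) < length C"
      using ij by (auto simp: length_chord_arc length_chord_bypass)
    have "2 * length (chord_arc C i j) \<le> card (binom2 (set (chord_arc C i j)) \<inter> H) + 3"
      using ij e e_ij less.prems by (intro less.hyps lengths(2) is_cycle_chord_arc) auto
    moreover have "2 * length (chord_bypass C i j) \<le> card (binom2 (set (chord_bypass C i j)) \<inter> H) + 3"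
      using ij e e_ij less.prems by (intro less.hyps lengths(3) is_cycle_chord_bypass) auto
    moreover note card_spanned_edges_chord_split[of i j C H, OF Suc_lessD[OF ij(1)] ij(2) d]
    ultimately show ?thesis using lengths(1) by linarith
  qed
qed

lemma chordal_cycle_card_chords:
  assumes "chordal V H" and "is_cycle V H C"
  shows "length C \<le> card (intr C \<inter> H) + 3"
proof -
  have d: "distinct C" and l3: "length C \<ge> 3" and eH: "ext C \<subseteq> H"
    using assms(2) unfolding is_cycle_def by auto
  have fin: "finite (binom2 (set C) \<inter> H)" using finite_binom2 by blast
  have sub: "ext C \<subseteq> binom2 (set C) \<inter> H" using ext_subset_binom2[OF d l3] eH by auto
  have "intr C \<inter> H = (binom2 (set C) \<inter> H) - ext C" unfolding intr_def by auto
  then have "card (intr C \<inter> H) = card (binom2 (set C) \<inter> H) - card (ext C)"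
    using card_Diff_subset[OF finite_subset[OF sub fin] sub] by simp
  moreover have "card (ext C) \<le> card (binom2 (set C) \<inter> H)" using card_mono[OF fin sub] .
  ultimately show ?thesis
    using chordal_cycle_card_spanned_edges[OF assms] card_ext_le[of C] l3 by linarith
qed

lemma binvecs_bounds: "x \<in> binvecs V E \<Longrightarrow> 0 \<le> x f \<and> x f \<le> 1"
  unfolding binvecs_def by (cases "f \<in> Ecomp V E") auto

lemma binvecs_eq_0: "x \<in> binvecs V E \<Longrightarrow> f \<notin> Ex V E x \<Longrightarrow> x f = 0"
  unfolding binvecs_def Ex_def by (cases "f \<in> Ecomp V E") auto

lemma sum_le_card_minus_one:
  fixes x :: "'b \<Rightarrow> int"
  assumes "finite A" and "\<And>a. a \<in> A \<Longrightarrow> x a \<le> 1" and "b \<in> A" and "x b = 0"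
  shows "sum x A \<le> int (card A) - 1"
proof -
  have "sum x A = sum x (A - {b})" using assms(1,3,4) by (simp add: sum.remove)
  also have "\<dots> \<le> (\<Sum>a\<in>A - {b}. 1)" using assms(2) by (intro sum_mono) auto
  also have "\<dots> = int (card A) - 1"
    using assms(1,3) card_gt_0_iff[of A] by (auto simp: card_Diff_singleton of_nat_diff)
  finally show ?thesis .
qed

lemma chordal_if_cycle_ineqs:
  assumes x: "x \<in> binvecs V E"
    and ineqs: "\<forall>C\<in>calC V. intr C \<inter> E = {} \<longrightarrow> cycle_ineq E x C"
  shows "chordal V (E \<union> Ex V E x)"
  unfolding chordal_def
proof (intro allI impI)
  fix C assume C: "is_cycle V (E \<union> Ex V E x) C \<and> 4 \<le> length C"
  show "has_chord (E \<union> Ex V E x) C"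
  proof (rule ccontr)
    assume "\<not> has_chord (E \<union> Ex V E x) C"
    then have no_chord: "f \<notin> E \<union> Ex V E x" if "f \<in> intr C" for f
      using that unfolding has_chord_def intr_def by auto
    have "cycle_ineq E x C"
      using ineqs no_chord C unfolding calC_def is_cycle_def by blast
    moreover have "(\<Sum>f\<in>intr C. x f) = 0"
      using binvecs_eq_0[OF x] no_chord by simp
    moreover have "(\<Sum>f\<in>Fc E C. x f) = (\<Sum>f\<in>Fc E C. 1)"
      using C unfolding is_cycle_def Fc_def Ex_def by (intro sum.cong) auto
    ultimately show False using C unfolding cycle_ineq_def by simp
  qed
qed

lemma cycle_ineq_if_chordal:
  assumes x: "x \<in> binvecs V E" and ch: "chordal V (E \<union> Ex V E x)"
    and C: "C \<in> calC V" and no_edge: "intr C \<inter> E = {}"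
  shows "cycle_ineq E x C"
proof -
  have d: "distinct C" and sV: "set C \<subseteq> V" and l3: "length C \<ge> 3"
    using C unfolding calC_def by auto
  have Fc_Ecomp: "Fc E C \<subseteq> Ecomp V E"
    using ext_subset_binom2[OF d l3] binom2_mono[OF sV] unfolding Fc_def Ecomp_def by auto
  have fin_Fc: "finite (Fc E C)"
    using finite_subset[OF ext_subset_binom2[OF d l3] finite_binom2] unfolding Fc_def by auto
  have fin_intr: "finite (intr C)" using finite_binom2 unfolding intr_def by auto
  have intr_nonneg: "(\<Sum>f\<in>intr C. x f) \<ge> 0" using binvecs_bounds[OF x] by (simp add: sum_nonneg)
  show ?thesis
  proof (cases "\<exists>f\<in>Fc E C. x f = 0")
    case True
    then obtain g where "g \<in> Fc E C" "x g = 0" by blast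
    then have "(\<Sum>f\<in>Fc E C. x f) - int (card (Fc E C)) + 1 \<le> 0"
      using sum_le_card_minus_one[OF fin_Fc, of x g] binvecs_bounds[OF x] by simp
    then have "(int (length C) - 3) * ((\<Sum>f\<in>Fc E C. x f) - int (card (Fc E C)) + 1) \<le> 0"
      using l3 by (intro mult_nonneg_nonpos) auto
    then show ?thesis unfolding cycle_ineq_def using intr_nonneg by linarith
  next
    case False
    then have ones: "x f = 1" if "f \<in> Fc E C" for f
      using that Fc_Ecomp x unfolding binvecs_def by blast
    then have "is_cycle V (E \<union> Ex V E x) C"
      using d sV l3 Fc_Ecomp unfolding is_cycle_def Fc_def Ex_def by blast
    then have "int (length C) - 3 \<le> int (card (intr C \<inter> (E \<union> Ex V E x)))"
      using chordal_cycle_card_chords[OF ch] by force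
    also have "\<dots> = (\<Sum>f\<in>intr C \<inter> (E \<union> Ex V E x). 1)" by simp
    also have "\<dots> = (\<Sum>f\<in>intr C \<inter> (E \<union> Ex V E x). x f)"
      using no_edge unfolding Ex_def by (intro sum.cong) auto
    also have "\<dots> \<le> (\<Sum>f\<in>intr C. x f)"
      using fin_intr binvecs_bounds[OF x] by (intro sum_mono2) auto
    finally show ?thesis using ones unfolding cycle_ineq_def by simp
  qed
qed

lemma cycle_ineqs_iff_XG:
  assumes "x \<in> binvecs V E"
  shows "(\<forall>C\<in>calC V. intr C \<inter> E = {} \<longrightarrow> cycle_ineq E x C) \<longleftrightarrow> x \<in> XG V E"
  using assms chordal_if_cycle_ineqs cycle_ineq_if_chordal unfolding XG_def by blast

lemma feasible_eq_XG: "feasible V E = XG V E"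
  unfolding feasible_def using cycle_ineqs_iff_XG by (auto simp: XG_def)

lemma XG_eq_charvec_image: "XG V E = charvec ` {F. chordal_completion V E F}"
proof (intro set_eqI iffI)
  fix x assume "x \<in> XG V E"
  moreover from this have "x = charvec (Ex V E x)"
    using binvecs_eq_0[of x V E] unfolding XG_def charvec_def by (auto simp: Ex_def)
  ultimately show "x \<in> charvec ` {F. chordal_completion V E F}"
    unfolding XG_def chordal_completion_def Ex_def by auto
next
  fix x assume "x \<in> charvec ` {F. chordal_completion V E F}"
  then obtain F where "F \<subseteq> Ecomp V E" "chordal V (E \<union> F)" "x = charvec F"
    unfolding chordal_completion_def by auto
  moreover from this have "Ex V E x = F" unfolding Ex_def charvec_def by auto
  ultimately show "x \<in> XG V E" unfolding XG_def binvecs_def charvec_def by auto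
qed

lemma sum_charvec: "finite A \<Longrightarrow> F \<subseteq> A \<Longrightarrow> (\<Sum>f\<in>A. charvec F f) = int (card F)"
  unfolding charvec_def by (simp add: sum.If_cases Int_absorb1)

lemma minimal_feasible_iff_minimum_completion:
  assumes "simple_graph V E"
  shows "(x \<in> feasible V E \<and> (\<forall>y\<in>feasible V E. (\<Sum>f\<in>Ecomp V E. x f) \<le> (\<Sum>f\<in>Ecomp V E. y f)))
     \<longleftrightarrow> (\<exists>F. chordal_completion V E F \<and>
            (\<forall>F'. chordal_completion V E F' \<longrightarrow> card F \<le> card F') \<and> x = charvec F)"
proof -
  have "finite (Ecomp V E)"
    using assms finite_binom2 unfolding simple_graph_def Ecomp_def by auto
  then have cost: "(\<Sum>f\<in>Ecomp V E. charvec F f) = int (card F)" if "chordal_completion V E F" for F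
    using that sum_charvec unfolding chordal_completion_def by blast
  show ?thesis
    unfolding feasible_eq_XG XG_eq_charvec_image by (auto simp: cost)
qed

theorem proposition1:
  fixes V :: "'a set" and E :: "'a set set"
  assumes "simple_graph V E"
  shows "(\<forall>x\<in>binvecs V E.
            (\<forall>C\<in>calC V. intr C \<inter> E = {} \<longrightarrow> cycle_ineq E x C) \<longleftrightarrow> x \<in> XG V E)
       \<and> (\<forall>x. (x \<in> feasible V E \<and>
                (\<forall>y\<in>feasible V E. (\<Sum>f\<in>Ecomp V E. x f) \<le> (\<Sum>f\<in>Ecomp V E. y f)))
             \<longleftrightarrow> (\<exists>F. chordal_completion V E F \<and>
                     (\<forall>F'. chordal_completion V E F' \<longrightarrow> card F \<le> card F') \<and>
                     x = charvec F))"
  using cycle_ineqs_iff_XG minimal_feasible_iff_minimum_completion[OF assms] by blast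

end
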